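(* Let $G$ be a finite simple graph with $n$ vertices and minimum degree $\delta > 1$. Let $\widehat{\delta} = \lfloor 0.5\,\delta \rfloor$, let $\delta' = \delta$ if $\delta$ is odd and $\delta' = \delta+1$ if $\delta$ is even, and let $\widetilde{d}_{0.5} = \binom{\delta'+1}{\lceil 0.5\,\delta' \rceil}$. Then $$\gamma_s(G) \le \left(1 - \frac{2\widehat{\delta}}{(1+\widehat{\delta})^{1+1/\widehat{\delta}}\,\widetilde{d}_{0.5}^{\;1/\widehat{\delta}}}\right) n.$$
   Context: For a vertex $v$ of $G$, $N[v]$ denotes the closed neighbourhood of $v$ (i.e. $v$ together with its neighbours). A signed domination function of $G$ is a function $f: V(G) \to \{-1, 1\}$ such that $\sum_{x \in N[v]} f(x) \ge 1$ for every vertex $v \in V(G)$. The weight of $f$ is $f(V(G)) = \sum_{v \in V(G)} f(v)$. The signed domination number $\gamma_s(G)$ is the minimum weight of a signed domination function of $G$. *)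

theory Defs
  imports Complex_Main
begin

definition simple_graph :: "'a set \<Rightarrow> ('a \<Rightarrow> 'a \<Rightarrow> bool) \<Rightarrow> bool" where
  "simple_graph V E \<longleftrightarrow> finite V \<and> (\<forall>u v. E u v \<longrightarrow> E v u)
     \<and> (\<forall>v. \<not> E v v) \<and> (\<forall>u v. E u v \<longrightarrow> u \<in> V \<and> v \<in> V)"

definition neighbours :: "'a set \<Rightarrow> ('a \<Rightarrow> 'a \<Rightarrow> bool) \<Rightarrow> 'a \<Rightarrow> 'a set" where
  "neighbours V E v = {u \<in> V. E v u}"

definition closed_nbhd :: "'a set \<Rightarrow> ('a \<Rightarrow> 'a \<Rightarrow> bool) \<Rightarrow> 'a \<Rightarrow> 'a set" where
  "closed_nbhd V E v = insert v (neighbours V E v)"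

definition degree :: "'a set \<Rightarrow> ('a \<Rightarrow> 'a \<Rightarrow> bool) \<Rightarrow> 'a \<Rightarrow> nat" where
  "degree V E v = card (neighbours V E v)"

definition min_degree :: "'a set \<Rightarrow> ('a \<Rightarrow> 'a \<Rightarrow> bool) \<Rightarrow> nat" where
  "min_degree V E = Min (degree V E ` V)"

definition signed_dom_fun :: "'a set \<Rightarrow> ('a \<Rightarrow> 'a \<Rightarrow> bool) \<Rightarrow> ('a \<Rightarrow> int) \<Rightarrow> bool" where
  "signed_dom_fun V E f \<longleftrightarrow> (\<forall>v\<in>V. f v \<in> {-1, 1}) \<and> (\<forall>v. v \<notin> V \<longrightarrow> f v = 0)
     \<and> (\<forall>v\<in>V. (\<Sum>x\<in>closed_nbhd V E v. f x) \<ge> 1)"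

definition signed_domination_number :: "'a set \<Rightarrow> ('a \<Rightarrow> 'a \<Rightarrow> bool) \<Rightarrow> int" where
  "signed_domination_number V E = Min {(\<Sum>v\<in>V. f v) | f. signed_dom_fun V E f}"

end

theory Submission
  imports Defs
begin

text \<open>Choose a random vertex set $A$, each vertex independently with probability $p$, and delete
  from $A$ one vertex of every $(\lfloor d(v)/2\rfloor + 1)$-subset of a closed neighbourhood
  $N[v] \cap A$. The remaining set $M$ meets every $N[v]$ in at most $\lfloor d(v)/2\rfloor$
  vertices, so $-1$ on $M$ and $1$ elsewhere is a signed domination function of weight
  $n - 2|M|$. By linearity of expectation some $M$ has
  $|M| \ge np - \sum_v \binom{d(v)+1}{\lfloor d(v)/2\rfloor+1} p^{\lfloor d(v)/2\rfloor+1}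
  \ge n\,(p - \binom{2k}{k} p^k)$ with $k = \widehat{\delta} + 1$, because
  $\binom{2j}{j} p^j$ decreases in $j$ for $p \le 1/4$. Optimising over $p$ gives the bound.
  Expectations are written as finite sums over \<open>Pow V\<close> weighted by the probability of
  each outcome.\<close>

definition subset_weight :: "'b::comm_ring_1 \<Rightarrow> 'a set \<Rightarrow> 'a set \<Rightarrow> 'b" where
  "subset_weight p V A = p ^ card A * (1 - p) ^ card (V - A)"

lemma sum_subset_weight:
  assumes "finite V"
  shows "(\<Sum>A\<in>Pow V. subset_weight p V A) = 1"
  using prod_add[OF assms, of "\<lambda>_. p" "\<lambda>_. 1 - p"] by (simp add: subset_weight_def)

lemma sum_subset_weight_supsets:
  assumes "finite V" and "S \<subseteq> V"
  shows "(\<Sum>A | A \<subseteq> V \<and> S \<subseteq> A. subset_weight p V A) = p ^ card S"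
proof -
  have bij: "bij_betw ((\<union>) S) (Pow (V - S)) {A. A \<subseteq> V \<and> S \<subseteq> A}"
    by (rule bij_betw_byWitness[where f' = "\<lambda>A. A - S"]) (use assms(2) in auto)
  have weight: "subset_weight p V (S \<union> B) = p ^ card S * subset_weight p (V - S) B"
    if "B \<in> Pow (V - S)" for B
  proof -
    have "finite S" "finite B" "S \<inter> B = {}"
      using that assms by (auto intro: finite_subset)
    moreover have "V - (S \<union> B) = V - S - B" by auto
    ultimately show ?thesis by (simp add: subset_weight_def card_Un_disjoint power_add)
  qed
  have "(\<Sum>A | A \<subseteq> V \<and> S \<subseteq> A. subset_weight p V A) = (\<Sum>B\<in>Pow (V - S). subset_weight p V (S \<union> B))"
    by (rule sum.reindex_bij_betw[OF bij, symmetric])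
  also have "\<dots> = p ^ card S * (\<Sum>B\<in>Pow (V - S). subset_weight p (V - S) B)"
    by (simp add: weight sum_distrib_left)
  also have "\<dots> = p ^ card S" using assms(1) by (simp add: sum_subset_weight)
  finally show ?thesis .
qed

lemma sum_subset_weight_card_choose:
  assumes "finite V" and "B \<subseteq> V"
  shows "(\<Sum>A\<in>Pow V. subset_weight p V A * of_nat (card (B \<inter> A) choose j)) = of_nat (card B choose j) * p ^ j"
proof -
  define X where "X = {T. T \<subseteq> B \<and> card T = j}"
  have finite: "finite B" "finite X" "finite (Pow V)"
    using assms finite_subset unfolding X_def by (auto intro: finite_subset[of _ "Pow B"])
  have "card (B \<inter> A) choose j = card {T \<in> X. T \<subseteq> A}" for A
  proof -
    have "{T \<in> X. T \<subseteq> A} = {T. T \<subseteq> B \<inter> A \<and> card T = j}" unfolding X_def by auto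
    then show ?thesis using finite(1) n_subsets[of "B \<inter> A" j] by (simp only:) simp
  qed
  then have "(\<Sum>A\<in>Pow V. subset_weight p V A * of_nat (card (B \<inter> A) choose j))
      = (\<Sum>A\<in>Pow V. \<Sum>T | T \<in> X \<and> T \<subseteq> A. subset_weight p V A)"
    by (simp add: mult.commute)
  also have "\<dots> = (\<Sum>T\<in>X. \<Sum>A | A \<in> Pow V \<and> T \<subseteq> A. subset_weight p V A)"
    by (rule sum.swap_restrict[OF finite(3,2)])
  also have "\<dots> = (\<Sum>T\<in>X. p ^ j)"
    using assms unfolding X_def by (intro sum.cong refl) (auto simp: sum_subset_weight_supsets)
  also have "\<dots> = of_nat (card B choose j) * p ^ j"
    using finite(1) by (simp add: X_def n_subsets)
  finally show ?thesis .
qed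

lemma obtain_ge_weighted_average:
  fixes w g :: "'a \<Rightarrow> real"
  assumes "finite I" and "\<And>i. i \<in> I \<Longrightarrow> 0 \<le> w i" and "sum w I = 1"
  obtains i where "i \<in> I" and "(\<Sum>j\<in>I. w j * g j) \<le> g i"
proof -
  have "I \<noteq> {}" using assms(3) by auto
  then have max: "Max (g ` I) \<in> g ` I" using assms(1) by simp
  have "(\<Sum>j\<in>I. w j * g j) \<le> (\<Sum>j\<in>I. w j * Max (g ` I))"
    using assms(1,2) by (intro sum_mono mult_left_mono) auto
  also have "\<dots> = Max (g ` I)" using assms(3) by (simp add: sum_distrib_right[symmetric])
  finally show ?thesis using max that by auto
qed

lemma exists_subset_meeting_each_at_most:
  fixes N :: "'v \<Rightarrow> 'a set" and m :: "'v \<Rightarrow> nat"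
  assumes "finite V" and "finite A"
  shows "\<exists>M\<subseteq>A. card A \<le> card M + (\<Sum>v\<in>V. card (N v \<inter> A) choose (m v + 1))
              \<and> (\<forall>v\<in>V. card (N v \<inter> M) \<le> m v)"
  using assms(2)
proof (induction A rule: finite_psubset_induct)
  case (psubset A)
  show ?case
  proof (cases "\<forall>v\<in>V. card (N v \<inter> A) \<le> m v")
    case True
    then show ?thesis by auto
  next
    case False
    then obtain v where v: "v \<in> V" "m v < card (N v \<inter> A)" by auto
    then have "N v \<inter> A \<noteq> {}" by auto
    then obtain x where x: "x \<in> N v" "x \<in> A" by blast
    define A' where "A' = A - {x}"
    have "A' \<subset> A" using x unfolding A'_def by auto
    then obtain M where M: "M \<subseteq> A'" "card A' \<le> card M + (\<Sum>u\<in>V. card (N u \<inter> A') choose (m u + 1))"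
      "\<forall>u\<in>V. card (N u \<inter> M) \<le> m u" using psubset.IH[OF \<open>A' \<subset> A\<close>] by blast
    have card_A: "card A = Suc (card A')"
      using card_Suc_Diff1[OF psubset.hyps x(2)] unfolding A'_def by simp
    have card_Nv: "card (N v \<inter> A) = Suc (card (N v \<inter> A'))"
    proof -
      have "N v \<inter> A = insert x (N v \<inter> A')" using x unfolding A'_def by auto
      then show ?thesis using psubset.hyps unfolding A'_def by simp
    qed
    have mono: "card (N u \<inter> A') choose (m u + 1) \<le> card (N u \<inter> A) choose (m u + 1)" for u
      using psubset.hyps unfolding A'_def by (intro binomial_right_mono card_mono) auto
    have "card (N v \<inter> A') choose (m v + 1) < card (N v \<inter> A) choose (m v + 1)"
      using v(2) unfolding card_Nv by (simp add: zero_less_binomial)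
    then have "(\<Sum>u\<in>V. card (N u \<inter> A') choose (m u + 1)) < (\<Sum>u\<in>V. card (N u \<inter> A) choose (m u + 1))"
      using mono v(1) assms(1) by (intro sum_strict_mono_ex1) auto
    then show ?thesis using M card_A \<open>A' \<subset> A\<close> by (intro exI[of _ M]) auto
  qed
qed

lemma exists_large_subset_meeting_each_at_most:
  fixes N :: "'a \<Rightarrow> 'a set" and m :: "'a \<Rightarrow> nat" and p :: real
  assumes "finite V" and "\<And>v. v \<in> V \<Longrightarrow> N v \<subseteq> V" and "0 \<le> p" "p \<le> 1"
  shows "\<exists>M\<subseteq>V. real (card V) * p - (\<Sum>v\<in>V. real (card (N v) choose (m v + 1)) * p ^ (m v + 1)) \<le> card M
              \<and> (\<forall>v\<in>V. card (N v \<inter> M) \<le> m v)"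
proof -
  let ?w = "subset_weight p V"
  \<comment> \<open>\<open>card (V \<inter> A) choose 1\<close> is \<open>card A\<close> on \<open>Pow V\<close>; written so that both parts of
    the expectation are instances of \<open>sum_subset_weight_card_choose\<close>.\<close>
  define g where "g A = real (card (V \<inter> A) choose 1) - (\<Sum>v\<in>V. real (card (N v \<inter> A) choose (m v + 1)))" for A
  have "(\<Sum>A\<in>Pow V. ?w A * g A)
      = (\<Sum>A\<in>Pow V. ?w A * real (card (V \<inter> A) choose 1))
        - (\<Sum>v\<in>V. \<Sum>A\<in>Pow V. ?w A * real (card (N v \<inter> A) choose (m v + 1)))"
    unfolding g_def by (simp add: right_diff_distrib sum_subtractf sum_distrib_left sum.swap[of _ V])
  also have "\<dots> = real (card V) * p - (\<Sum>v\<in>V. real (card (N v) choose (m v + 1)) * p ^ (m v + 1))"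
    using sum_subset_weight_card_choose[OF assms(1) order_refl, of p 1]
      sum_subset_weight_card_choose[OF assms(1) assms(2), of _ p] by simp
  finally have average: "(\<Sum>A\<in>Pow V. ?w A * g A) = \<dots>" .
  have "0 \<le> ?w A" for A using assms(3,4) by (simp add: subset_weight_def)
  then obtain A where A: "A \<subseteq> V" and "(\<Sum>A\<in>Pow V. ?w A * g A) \<le> g A"
    using obtain_ge_weighted_average[of "Pow V" ?w g] assms(1) by (auto simp: sum_subset_weight)
  then have g_A: "real (card V) * p - (\<Sum>v\<in>V. real (card (N v) choose (m v + 1)) * p ^ (m v + 1)) \<le> g A"
    using average by simp
  obtain M where M: "M \<subseteq> A" "card A \<le> card M + (\<Sum>v\<in>V. card (N v \<inter> A) choose (m v + 1))"
      "\<forall>v\<in>V. card (N v \<inter> M) \<le> m v"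
    using exists_subset_meeting_each_at_most[OF assms(1) finite_subset[OF A assms(1)]] by blast
  have "real (card A) \<le> real (card M) + (\<Sum>v\<in>V. real (card (N v \<inter> A) choose (m v + 1)))"
    using M(2) unfolding of_nat_sum[symmetric] of_nat_add[symmetric] of_nat_le_iff .
  then have "g A \<le> card M"
    using A unfolding g_def by (simp add: Int_absorb1)
  then show ?thesis using g_A M A by (intro exI[of _ M]) auto
qed

lemma binomial_Suc_le_double_max: "Suc n choose k \<le> 2 * (n choose (n div 2))"
proof (cases k)
  case 0
  then show ?thesis by (simp add: Suc_leI)
next
  case (Suc i)
  then show ?thesis using binomial_maximum[of n i] binomial_maximum[of n "Suc i"] by simp
qed

lemma central_binomial_Suc_le: "2 * Suc n choose Suc n \<le> 4 * (2 * n choose n)"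
proof -
  have "2 * Suc n choose Suc n = (Suc (2 * n) choose n) + (Suc (2 * n) choose Suc n)" by simp
  also have "\<dots> \<le> 2 * (2 * n choose n) + 2 * (2 * n choose n)"
    using binomial_Suc_le_double_max[of "2 * n"] by (intro add_mono) (simp_all del: binomial_Suc_Suc)
  finally show ?thesis by simp
qed

lemma central_binomial_power_antimono:
  fixes p :: real
  assumes "0 \<le> p" "p \<le> 1/4" "k \<le> j"
  shows "real (2 * j choose j) * p ^ j \<le> real (2 * k choose k) * p ^ k"
  using assms(3)
proof (induction j rule: dec_induct)
  case base
  then show ?case by simp
next
  case (step j)
  have "real (2 * Suc j choose Suc j) * p \<le> 4 * real (2 * j choose j) * p"
    using central_binomial_Suc_le[of j] assms(1) by (intro mult_right_mono) (simp_all flip: of_nat_le_iff)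
  also have "\<dots> \<le> real (2 * j choose j)"
    using assms(2) by (simp add: mult_left_le)
  finally have "real (2 * Suc j choose Suc j) * p ^ Suc j \<le> real (2 * j choose j) * p ^ j"
    using assms(1) by (simp add: mult.assoc[symmetric] mult_right_mono)
  also have "\<dots> \<le> real (2 * k choose k) * p ^ k" by (rule step.IH)
  finally show ?case .
qed

lemma closed_nbhd_subset: "v \<in> V \<Longrightarrow> closed_nbhd V E v \<subseteq> V"
  by (auto simp: closed_nbhd_def neighbours_def)

lemma card_closed_nbhd:
  assumes "simple_graph V E"
  shows "card (closed_nbhd V E v) = degree V E v + 1"
proof -
  have "finite (neighbours V E v)" "v \<notin> neighbours V E v"
    using assms by (auto simp: simple_graph_def neighbours_def)
  then show ?thesis by (simp add: closed_nbhd_def degree_def)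
qed

lemma min_degree_le_degree: "finite V \<Longrightarrow> v \<in> V \<Longrightarrow> min_degree V E \<le> degree V E v"
  unfolding min_degree_def by simp

lemma signed_domination_number_le:
  assumes "finite V" and "signed_dom_fun V E f"
  shows "signed_domination_number V E \<le> (\<Sum>v\<in>V. f v)"
proof -
  let ?S = "{(\<Sum>v\<in>V. f v) | f. signed_dom_fun V E f}"
  have "\<bar>\<Sum>v\<in>V. g v\<bar> \<le> int (card V)" if "signed_dom_fun V E g" for g
  proof -
    have "\<bar>\<Sum>v\<in>V. g v\<bar> \<le> (\<Sum>v\<in>V. \<bar>g v\<bar>)" by (rule sum_abs)
    also have "\<dots> = (\<Sum>v\<in>V. 1)" using that by (intro sum.cong) (auto simp: signed_dom_fun_def)
    finally show ?thesis by simp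
  qed
  then have "?S \<subseteq> {- int (card V) .. int (card V)}" by fastforce
  then have "finite ?S" by (rule finite_subset) simp
  then show ?thesis unfolding signed_domination_number_def using assms(2) by (auto intro: Min_le)
qed

text \<open>Giving the value $-1$ to the vertices of $M$ and $1$ to all others is a signed domination
  function as soon as $M$ contains at most half of every closed neighbourhood.\<close>

lemma signed_domination_number_le_card_diff:
  assumes "simple_graph V E" and "M \<subseteq> V"
    and sparse: "\<And>v. v \<in> V \<Longrightarrow> card (closed_nbhd V E v \<inter> M) \<le> degree V E v div 2"
  shows "signed_domination_number V E \<le> int (card V) - 2 * int (card M)"
proof -
  have finite: "finite V" using assms(1) by (simp add: simple_graph_def)
  define f where "f v = (if v \<in> V then if v \<in> M then -1 else 1 else 0::int)" for v
  have sum_f: "(\<Sum>x\<in>B. f x) = int (card B) - 2 * int (card (B \<inter> M))" if "B \<subseteq> V" for B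
  proof -
    have "finite B" using that finite by (rule finite_subset)
    have "(\<Sum>x\<in>B. f x) = (\<Sum>x\<in>B. 1 - 2 * (if x \<in> M then 1 else 0))"
      using that by (intro sum.cong) (auto simp: f_def)
    also have "\<dots> = int (card B) - 2 * int (card (B \<inter> M))"
      using \<open>finite B\<close> by (simp add: sum_subtractf sum_distrib_left[symmetric] sum.If_cases)
    finally show ?thesis .
  qed
  have "signed_dom_fun V E f"
    unfolding signed_dom_fun_def
  proof (intro conjI ballI allI impI)
    fix v assume "v \<in> V"
    then show "1 \<le> (\<Sum>x\<in>closed_nbhd V E v. f x)"
      using sum_f[OF closed_nbhd_subset] sparse card_closed_nbhd[OF assms(1)] by fastforce
  qed (auto simp: f_def)
  with finite have "signed_domination_number V E \<le> (\<Sum>v\<in>V. f v)"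
    by (rule signed_domination_number_le)
  also have "\<dots> = int (card V) - 2 * int (card M)"
    using sum_f[of V] assms(2) by (simp add: Int_absorb1)
  finally show ?thesis .
qed

lemma signed_domination_number_le_deletion_bound:
  fixes p :: real
  assumes graph: "simple_graph V E" and degree: "\<And>v. v \<in> V \<Longrightarrow> 2 * h \<le> degree V E v"
    and "0 \<le> p" "p \<le> 1/4"
  shows "real_of_int (signed_domination_number V E)
           \<le> (1 - 2 * (p - real (2 * Suc h choose Suc h) * p ^ Suc h)) * real (card V)"
proof -
  let ?N = "closed_nbhd V E" and ?m = "\<lambda>v. degree V E v div 2"
  let ?D = "real (2 * Suc h choose Suc h)"
  have finite: "finite V" using graph by (simp add: simple_graph_def)
  obtain M where "M \<subseteq> V" and M_large: "real (card V) * p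
      - (\<Sum>v\<in>V. real (card (?N v) choose (?m v + 1)) * p ^ (?m v + 1)) \<le> card M"
    and M_sparse: "\<forall>v\<in>V. card (?N v \<inter> M) \<le> ?m v"
    using exists_large_subset_meeting_each_at_most[where N = ?N and m = ?m and p = p,
        OF finite closed_nbhd_subset assms(3)] assms(4) by auto
  have "real (card (?N v) choose (?m v + 1)) * p ^ (?m v + 1) \<le> ?D * p ^ Suc h" if "v \<in> V" for v
  proof -
    have "card (?N v) choose (?m v + 1) \<le> 2 * (?m v + 1) choose (?m v + 1)"
      unfolding card_closed_nbhd[OF graph] by (intro binomial_right_mono) simp
    then have "real (card (?N v) choose (?m v + 1)) * p ^ (?m v + 1)
        \<le> real (2 * (?m v + 1) choose (?m v + 1)) * p ^ (?m v + 1)"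
      using assms(3) by (intro mult_right_mono) simp_all
    also have "\<dots> \<le> ?D * p ^ Suc h"
      using degree[OF that] assms(3,4) by (intro central_binomial_power_antimono) auto
    finally show ?thesis .
  qed
  then have "(\<Sum>v\<in>V. real (card (?N v) choose (?m v + 1)) * p ^ (?m v + 1)) \<le> real (card V) * (?D * p ^ Suc h)"
    using sum_mono[of V _ "\<lambda>_. ?D * p ^ Suc h"] by simp
  with M_large have "real (card V) * (p - ?D * p ^ Suc h) \<le> card M"
    by (simp add: right_diff_distrib)
  moreover have "signed_domination_number V E \<le> int (card V) - 2 * int (card M)"
    using signed_domination_number_le_card_diff[OF graph \<open>M \<subseteq> V\<close>] M_sparse by simp
  ultimately show ?thesis by (simp add: algebra_simps)
qed

text \<open>The probability $p$ with $p^h = 1/((h+1)D)$ maximises $p - D p^{h+1}$.\<close>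

lemma deletion_gain_at_optimum:
  fixes D :: real
  assumes "1 \<le> h" and "0 < D"
  defines "p \<equiv> (real (Suc h) * D) powr (- 1 / real h)"
  shows "p ^ h = 1 / (real (Suc h) * D)"
    and "p - D * p ^ Suc h = real h / ((1 + real h) powr (1 + 1 / real h) * D powr (1 / real h))"
    and "4 ^ h \<le> real (Suc h) * D \<Longrightarrow> p \<le> 1/4"
proof -
  have pos: "0 < real (Suc h) * D" using assms(2) by simp
  have "0 < p" using assms(2) by (simp add: p_def)
  then have "p ^ h = p powr real h" by (simp add: powr_realpow)
  also have "\<dots> = 1 / (real (Suc h) * D)"
    using assms(1) pos by (simp add: p_def powr_powr powr_neg_one)
  finally show p_h: "p ^ h = 1 / (real (Suc h) * D)" .
  have "D * p ^ Suc h = p / real (Suc h)" using assms(2) by (simp add: p_h)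
  then have "p - D * p ^ Suc h = p * real h / real (Suc h)" by (simp add: field_simps)
  also have "\<dots> = real h / ((real (Suc h) * D) powr (1 / real h) * real (Suc h))"
    by (simp add: p_def powr_minus field_simps)
  also have "(real (Suc h) * D) powr (1 / real h) * real (Suc h)
      = (1 + real h) powr (1 + 1 / real h) * D powr (1 / real h)"
    using assms by (simp add: powr_add powr_mult add.commute)
  finally show "p - D * p ^ Suc h = real h / ((1 + real h) powr (1 + 1 / real h) * D powr (1 / real h))" .
  assume "4 ^ h \<le> real (Suc h) * D"
  then have "p ^ h \<le> (1/4) ^ h" using pos by (simp add: p_h power_one_over divide_simps)
  then show "p \<le> 1/4" using \<open>0 < p\<close> assms(1) by simp
qed

lemma four_power_le_Suc_mult_central_binomial: "4 ^ h \<le> Suc h * (2 * Suc h choose Suc h)"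
proof -
  have "real (4 ^ Suc h) \<le> real (2 * Suc h * (2 * Suc h choose Suc h))"
    using central_binomial_lower_bound[of "Suc h"] by (simp add: field_simps del: binomial_Suc_Suc)
  then have "4 * 4 ^ h \<le> 2 * (Suc h * (2 * Suc h choose Suc h))"
    unfolding of_nat_le_iff by (simp del: binomial_Suc_Suc)
  then show ?thesis by linarith
qed

theorem theorem4:
  fixes V :: "'a set" and E :: "'a \<Rightarrow> 'a \<Rightarrow> bool"
  assumes "simple_graph V E" and "V \<noteq> {}" and "min_degree V E > 1"
  shows "let \<delta> = min_degree V E;
             \<delta>h = \<delta> div 2;
             \<delta>' = (if odd \<delta> then \<delta> else \<delta> + 1);
             d = real ((\<delta>' + 1) choose (nat \<lceil>real \<delta>' / 2\<rceil>))
         in real_of_int (signed_domination_number V E)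
            \<le> (1 - 2 * real \<delta>h / ((1 + real \<delta>h) powr (1 + 1 / real \<delta>h) * d powr (1 / real \<delta>h)))
              * real (card V)"
proof -
  define h where "h = min_degree V E div 2"
  define D where "D = real (2 * Suc h choose Suc h)"
  define p where "p = (real (Suc h) * D) powr (- 1 / real h)"
  have "1 \<le> h" "0 < D" using assms(3) by (simp_all add: h_def D_def del: binomial_Suc_Suc)
  note optimum = deletion_gain_at_optimum[OF this, folded p_def]
  have "0 < p" using \<open>0 < D\<close> by (simp add: p_def)
  have "(4::real) ^ h \<le> real (Suc h) * D"
    using four_power_le_Suc_mult_central_binomial[of h] unfolding D_def
    by (metis of_nat_le_iff of_nat_mult of_nat_numeral of_nat_power)
  then have "p \<le> 1/4" by (rule optimum(3))
  have "2 * h \<le> degree V E v" if "v \<in> V" for v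
    using min_degree_le_degree[OF _ that, of E] assms(1) by (simp add: h_def simple_graph_def)
  then have bound: "real_of_int (signed_domination_number V E)
      \<le> (1 - 2 * (p - D * p ^ Suc h)) * real (card V)"
    using signed_domination_number_le_deletion_bound[OF assms(1)] \<open>0 < p\<close> \<open>p \<le> 1/4\<close>
    unfolding D_def by simp
  have odd_part: "(if odd (min_degree V E) then min_degree V E else min_degree V E + 1) = 2 * h + 1"
    unfolding h_def by (simp add: odd_two_times_div_two_succ even_two_times_div_two)
  have "nat \<lceil>real (2 * h + 1) / 2\<rceil> = Suc h"
    by (simp add: ceiling_unique[of "int h + 1"])
  then have d: "real ((2 * h + 1 + 1) choose nat \<lceil>real (2 * h + 1) / 2\<rceil>) = D"
    by (simp add: D_def del: binomial_Suc_Suc)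
  show ?thesis
    unfolding Let_def h_def[symmetric] odd_part d using bound unfolding optimum(2) by simp
qed

end
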